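(* Let $L$ and ${}^*L=e^{\sigma(x)}L+\beta$ be as in the context. Then the torsion vectors satisfy $${}^*c_i=c_i+\frac{n+1}{2\,{}^*L}m_i .$$
   Context: $M$ is a smooth manifold of dimension $n$ with local coordinates $(x^i)$ and induced fiber coordinates $(y^i)$ on $TM$. $L(x,y)$ is a Finsler metric: positive and smooth for $y\neq0$, positively homogeneous of degree 1 in $y$, with positive definite fundamental tensor $g_{ij}=\frac12\frac{\partial^2L^2}{\partial y^i\partial y^j}$ and inverse $g^{ij}$. $\sigma(x)$ is a smooth function on $M$ and $\beta(x,y)=b_i(x)y^i$ is a 1-form; the conformal $\beta$-change is ${}^*L=e^{\sigma(x)}L+\beta$, assumed to be again a Finsler metric. Notation: $l_i=\partial L/\partial y^i$, $c_{ijk}=\frac12\partial g_{ij}/\partial y^k$, $c_i=g^{jk}c_{ijk}$, $m_i=b_i-\frac{\beta}{L}l_i$. Quantities built from ${}^*L$ by the same formulas (using ${}^*g_{ij}$ and its inverse ${}^*g^{ij}$) are denoted with a left asterisk; in particular ${}^*c_i={}^*g^{jk}\,{}^*c_{ijk}$. *)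

theory Defs
  imports "HOL-Analysis.Analysis"
begin

definition dirder :: "('a::real_normed_vector \<Rightarrow> real) \<Rightarrow> 'a \<Rightarrow> 'a \<Rightarrow> real" where
  "dirder f v p = deriv (\<lambda>t. f (p + t *\<^sub>R v)) 0"

fun iter_dirder :: "('a::real_normed_vector \<Rightarrow> real) \<Rightarrow> 'a list \<Rightarrow> 'a \<Rightarrow> real" where
  "iter_dirder f [] = f"
| "iter_dirder f (v # vs) = dirder (iter_dirder f vs) v"

definition smooth_on :: "'a::euclidean_space set \<Rightarrow> ('a \<Rightarrow> real) \<Rightarrow> bool" where
  "smooth_on S f \<longleftrightarrow>
     (\<forall>vs. set vs \<subseteq> Basis \<longrightarrow>
        continuous_on S (iter_dirder f vs) \<and>
        (\<forall>v\<in>Basis. \<forall>p\<in>S. (\<lambda>t. iter_dirder f vs (p + t *\<^sub>R v)) differentiable (at 0)))"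

definition ypd :: "(real^'n \<Rightarrow> real) \<Rightarrow> 'n \<Rightarrow> real^'n \<Rightarrow> real" where
  "ypd F i y = dirder F (axis i 1) y"

definition fund :: "(real^'n \<Rightarrow> real^'n \<Rightarrow> real) \<Rightarrow> real^'n \<Rightarrow> real^'n \<Rightarrow> real^'n^'n" where
  "fund L x y = (\<chi> i j. (1/2) * ypd (\<lambda>z. ypd (\<lambda>w. (L x w)^2) j z) i y)"

definition cartan :: "(real^'n \<Rightarrow> real^'n \<Rightarrow> real) \<Rightarrow> real^'n \<Rightarrow> real^'n \<Rightarrow> 'n \<Rightarrow> 'n \<Rightarrow> 'n \<Rightarrow> real" where
  "cartan L x y i j k = (1/2) * ypd (\<lambda>z. fund L x z $ i $ j) k y"

definition torsion :: "(real^'n \<Rightarrow> real^'n \<Rightarrow> real) \<Rightarrow> real^'n \<Rightarrow> real^'n \<Rightarrow> 'n \<Rightarrow> real" where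
  "torsion L x y i = (\<Sum>j\<in>UNIV. \<Sum>k\<in>UNIV. matrix_inv (fund L x y) $ j $ k * cartan L x y i j k)"

(* Finsler metric on the coordinate domain U (local coordinates x, fibre coordinates y) *)
definition finsler :: "(real^'n) set \<Rightarrow> (real^'n \<Rightarrow> real^'n \<Rightarrow> real) \<Rightarrow> bool" where
  "finsler U L \<longleftrightarrow>
     smooth_on (U \<times> (UNIV - {0})) (\<lambda>p. L (fst p) (snd p)) \<and>
     (\<forall>x\<in>U. \<forall>y. y \<noteq> 0 \<longrightarrow>
        L x y > 0 \<and>
        (\<forall>t>0. L x (t *\<^sub>R y) = t * L x y) \<and>
        (\<forall>v. v \<noteq> 0 \<longrightarrow> v \<bullet> (fund L x y *v v) > 0))"

end

theory Submission
  imports Defs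
begin

(*
  At a point x, *L(x,-) = c L(x,-) + beta with the constant c = exp (sigma x), so everything
  is determined by the fibre jet of L(x,-) at y: F = L, l = dL, H = d^2 L and T = d^3 L.
  In these terms g = l l^T + F H and 2 c_ijk = H_ki l_j + l_i H_kj + l_k H_ij + F T_ijk, and
  Euler's theorem for the 1-homogeneous L gives l.y = F, H y = 0 and T_ijk y^k = -H_ij.
  Multiplying the jet by c multiplies g and c_ijk by c^2 and so leaves the torsion unchanged;
  it remains to treat the Randers change F' = F + b.y, l' = l + b.  For k = F'/F one has
  k g - g' = k l l^T - l' l'^T with g y = F l and g' y = F' l', so the inverses of k g and g'
  differ by terms u y^T + y v^T, which the Cartan tensor of L' does not see because it
  annihilates y.  Finally c'_ijk = k c_ijk + (H_ki m_j + m_i H_kj + m_k H_ij)/2, and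
  F g^-1 H = I - y l^T / F turns the contraction of the last term into (n + 1) m_i / F.
*)

section \<open>Linear algebra\<close>

definition outer :: "real^'n \<Rightarrow> real^'m \<Rightarrow> real^'m^'n" where
  "outer u v = (\<chi> i j. u$i * v$j)"

definition contract :: "real^'n^'m \<Rightarrow> real^'n^'m \<Rightarrow> real" where
  "contract M C = (\<Sum>j\<in>UNIV. \<Sum>k\<in>UNIV. M$j$k * C$j$k)"

lemma matrix_inv_right: "invertible A \<Longrightarrow> A ** matrix_inv A = mat 1"
  and matrix_inv_left: "invertible A \<Longrightarrow> matrix_inv A ** A = mat 1"
  for A :: "real^'n^'n"
  unfolding invertible_def matrix_inv_def by (metis (mono_tags, lifting) someI_ex)+

lemma symmetric_matrix_entry: "transpose A = A \<Longrightarrow> A$i$j = A$j$i"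
  by (metis transpose_def vec_lambda_beta)

lemma matrix_inv_mult_vector:
  fixes A :: "real^'n^'n"
  assumes "invertible A" "A *v y = a *\<^sub>R v" "a \<noteq> 0"
  shows "matrix_inv A *v v = (1/a) *\<^sub>R y"
proof -
  have "y = matrix_inv A *v (A *v y)"
    by (simp add: matrix_vector_mul_assoc matrix_inv_left[OF assms(1)])
  also have "\<dots> = a *\<^sub>R (matrix_inv A *v v)"
    by (simp add: assms(2) matrix_scaleR_vector_ac scaleR_matrix_vector_assoc)
  finally show ?thesis using assms(3) by simp
qed

lemma transpose_matrix_inv:
  fixes A :: "real^'n^'n"
  assumes "invertible A" "transpose A = A"
  shows "transpose (matrix_inv A) = matrix_inv A"
proof -
  have "transpose (matrix_inv A) ** A = mat 1"
    by (metis assms matrix_inv_right matrix_transpose_mul transpose_mat)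
  have "transpose (matrix_inv A) = transpose (matrix_inv A) ** (A ** matrix_inv A)"
    by (simp add: matrix_inv_right[OF assms(1)])
  also have "\<dots> = matrix_inv A"
    by (simp add: matrix_mul_assoc \<open>transpose (matrix_inv A) ** A = mat 1\<close>)
  finally show ?thesis .
qed

lemma matrix_inv_scaleR:
  fixes A :: "real^'n^'n"
  assumes "invertible A" "c \<noteq> 0"
  shows "matrix_inv (c *\<^sub>R A) = (1/c) *\<^sub>R matrix_inv A"
proof -
  have "(c *\<^sub>R A) ** ((1/c) *\<^sub>R matrix_inv A) = mat 1"
    "((1/c) *\<^sub>R matrix_inv A) ** (c *\<^sub>R A) = mat 1"
    using assms by (simp_all add: matrix_scalar_ac scalar_matrix_assoc[symmetric]
        matrix_inv_right matrix_inv_left)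
  then show ?thesis
    by (metis matrix_inv_left matrix_mul_assoc matrix_mul_lid matrix_mul_rid
        scalar_invertible assms)
qed

lemma matrix_diff_ldistrib: "A ** (B - C) = A ** B - A ** (C :: real^'p^'n)"
  for A :: "real^'n^'m"
  by (simp add: matrix_matrix_mult_def vec_eq_iff sum_subtractf algebra_simps)

lemma matrix_diff_rdistrib: "(A - B) ** C = A ** C - B ** (C :: real^'p^'n)"
  for A :: "real^'n^'m"
  by (simp add: matrix_matrix_mult_def vec_eq_iff sum_subtractf algebra_simps)

lemma matrix_inv_diff:
  fixes A B :: "real^'n^'n"
  assumes "invertible A" "invertible B"
  shows "matrix_inv A - matrix_inv B = matrix_inv A ** (B - A) ** matrix_inv B"
  by (simp add: matrix_diff_ldistrib matrix_diff_rdistrib assms matrix_inv_right matrix_inv_left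
      flip: matrix_mul_assoc)

lemma matrix_mul_outer: "M ** outer u v = outer (M *v u) v"
  by (simp add: outer_def matrix_matrix_mult_def matrix_vector_mult_def vec_eq_iff
      sum_distrib_right mult.assoc)

lemma outer_matrix_mul: "outer u v ** M = outer u (v v* M)"
  by (simp add: outer_def matrix_matrix_mult_def vector_matrix_mult_def vec_eq_iff
      sum_distrib_left mult.assoc)

lemma contract_outer: "contract (outer u v) C = u \<bullet> (C *v v)"
  by (simp add: contract_def outer_def inner_vec_def matrix_vector_mult_def sum_distrib_left
      mult_ac)

lemma contract_outer': "contract (outer u v) C = (u v* C) \<bullet> v"
  unfolding contract_def outer_def inner_vec_def vector_matrix_mult_def
  by (subst sum.swap) (simp add: sum_distrib_left mult_ac)

lemma contract_diff_left: "contract (M - N) C = contract M C - contract N C"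
  by (simp add: contract_def algebra_simps sum_subtractf)

lemma contract_scaleR_left: "contract (c *\<^sub>R M) C = c * contract M C"
  by (simp add: contract_def sum_distrib_left mult.assoc)

lemma contract_add_right: "contract M (C + D) = contract M C + contract M D"
  by (simp add: contract_def algebra_simps sum.distrib)

lemma contract_scaleR_right: "contract M (c *\<^sub>R C) = c * contract M C"
  by (simp add: contract_def sum_distrib_left mult_ac)

text \<open>\<open>A\<^sup>-\<^sup>1 - B\<^sup>-\<^sup>1 = A\<^sup>-\<^sup>1 (B - A) B\<^sup>-\<^sup>1\<close> is a sum of outer products with \<open>y\<close> as one
  factor, and \<open>C\<close> annihilates \<open>y\<close> on both sides.\<close>
lemma contract_matrix_inv_eq:
  fixes A B C :: "real^'n^'n"
  assumes A: "invertible A" and B: "invertible B" "transpose B = B"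
    and diff: "B - A = outer w u - outer v z"
    and Ay: "A *v y = a *\<^sub>R v" "a \<noteq> 0" and By: "B *v y = b *\<^sub>R u" "b \<noteq> 0"
    and Cy: "C *v y = 0" "y v* C = 0"
  shows "contract (matrix_inv A) C = contract (matrix_inv B) C"
proof -
  have "u v* matrix_inv B = (1/b) *\<^sub>R y"
    using matrix_inv_mult_vector[OF B(1) By] transpose_matrix_inv[OF B]
    by (metis vector_transpose_matrix)
  moreover have "matrix_inv A *v v = (1/a) *\<^sub>R y"
    by (rule matrix_inv_mult_vector[OF A Ay])
  moreover have "matrix_inv A - matrix_inv B
      = outer (matrix_inv A *v w) (u v* matrix_inv B) - outer (matrix_inv A *v v) (z v* matrix_inv B)"
    unfolding matrix_inv_diff[OF A B(1)] diff matrix_diff_ldistrib matrix_diff_rdistrib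
    by (simp only: matrix_mul_outer outer_matrix_mul)
  ultimately have "matrix_inv A - matrix_inv B
      = outer (matrix_inv A *v w) ((1/b) *\<^sub>R y) - outer ((1/a) *\<^sub>R y) (z v* matrix_inv B)"
    by simp
  moreover have "contract (outer (matrix_inv A *v w) ((1/b) *\<^sub>R y)) C = 0"
    by (simp add: contract_outer matrix_vector_mult_scaleR Cy)
  moreover have "contract (outer ((1/a) *\<^sub>R y) (z v* matrix_inv B)) C = 0"
    by (simp add: contract_outer' scaleR_vector_matrix_assoc Cy)
  ultimately have "contract (matrix_inv A - matrix_inv B) C = 0"
    by (simp add: contract_diff_left)
  then show ?thesis by (simp add: contract_diff_left)
qed

section \<open>The torsion of a jet\<close>

text \<open>\<open>F\<close>, \<open>l\<close>, \<open>H\<close>, \<open>T\<close> stand for the value, gradient, Hessian and third derivatives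
  \<open>T i j k = \<partial>\<^sub>k H$i$j\<close> of \<open>L(x,-)\<close> at \<open>y\<close>; \<open>homogeneous_jet\<close> collects the
  identities that Euler's theorem yields for a 1-homogeneous \<open>L\<close>.\<close>

definition fund_jet :: "real \<Rightarrow> real^'n \<Rightarrow> real^'n^'n \<Rightarrow> real^'n^'n" where
  "fund_jet F l H = outer l l + F *\<^sub>R H"

definition cartan_jet ::
    "real \<Rightarrow> real^'n \<Rightarrow> real^'n^'n \<Rightarrow> ('n \<Rightarrow> 'n \<Rightarrow> 'n \<Rightarrow> real) \<Rightarrow> 'n \<Rightarrow> real^'n^'n" where
  "cartan_jet F l H T i = (\<chi> j k. (H$k$i * l$j + l$i * H$k$j + l$k * H$i$j + F * T i j k) / 2)"

definition torsion_jet ::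
    "real \<Rightarrow> real^'n \<Rightarrow> real^'n^'n \<Rightarrow> ('n \<Rightarrow> 'n \<Rightarrow> 'n \<Rightarrow> real) \<Rightarrow> 'n \<Rightarrow> real" where
  "torsion_jet F l H T i = contract (matrix_inv (fund_jet F l H)) (cartan_jet F l H T i)"

definition homogeneous_jet ::
    "real^'n \<Rightarrow> real \<Rightarrow> real^'n \<Rightarrow> real^'n^'n \<Rightarrow> ('n \<Rightarrow> 'n \<Rightarrow> 'n \<Rightarrow> real) \<Rightarrow> bool" where
  "homogeneous_jet y F l H T \<longleftrightarrow>
     l \<bullet> y = F \<and> transpose H = H \<and> H *v y = 0 \<and>
     (\<forall>i j k. T i j k = T i k j) \<and> (\<forall>i j. (\<Sum>k\<in>UNIV. T i j k * y$k) = - H$i$j)"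

lemma homogeneous_jet_add_linear:
  "homogeneous_jet y F l H T \<Longrightarrow> homogeneous_jet y (F + b \<bullet> y) (l + b) H T"
  by (simp add: homogeneous_jet_def inner_add_left)

lemma homogeneous_jet_scaleR:
  assumes "homogeneous_jet y F l H T"
  shows "homogeneous_jet y (c * F) (c *\<^sub>R l) (c *\<^sub>R H) (\<lambda>i j k. c * T i j k)"
proof -
  have "(\<Sum>k\<in>UNIV. c * T i j k * y$k) = c * (\<Sum>k\<in>UNIV. T i j k * y$k)" for i j
    by (simp add: sum_distrib_left mult.assoc)
  then show ?thesis
    using assms by (simp add: homogeneous_jet_def transpose_scalar
        flip: scaleR_matrix_vector_assoc)
qed

lemma transpose_fund_jet: "transpose H = H \<Longrightarrow> transpose (fund_jet F l H) = fund_jet F l H"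
  by (simp add: fund_jet_def outer_def transpose_def vec_eq_iff mult.commute)

lemma fund_jet_mult_vector:
  assumes "homogeneous_jet y F l H T"
  shows "fund_jet F l H *v y = F *\<^sub>R l"
proof -
  have "outer l l *v y = (l \<bullet> y) *\<^sub>R l"
    by (simp add: outer_def matrix_vector_mult_def inner_vec_def vec_eq_iff sum_distrib_left
        mult_ac)
  then show ?thesis
    using assms by (simp add: homogeneous_jet_def fund_jet_def matrix_vector_mult_add_rdistrib
        scaleR_matrix_vector_assoc[symmetric])
qed

lemma cartan_jet_mult_vector:
  assumes "homogeneous_jet y F l H T"
  shows "cartan_jet F l H T i *v y = 0" "y v* cartan_jet F l H T i = 0"
proof -
  from assms have ly: "(\<Sum>k\<in>UNIV. l$k * y$k) = F"
    and Hs: "\<And>i j. H$i$j = H$j$i"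
    and Hy: "\<And>i. (\<Sum>k\<in>UNIV. H$i$k * y$k) = 0"
    and Ts: "\<And>j k. T i j k = T i k j"
    and Ty: "\<And>j. (\<Sum>k\<in>UNIV. T i j k * y$k) = - H$i$j"
    unfolding homogeneous_jet_def inner_vec_def
    by (auto simp: vec_eq_iff matrix_vector_mult_def transpose_def)
  have Hy': "(\<Sum>k\<in>UNIV. H$k$j * y$k) = 0" for j
    using Hy[of j] by (simp add: Hs[of _ j])
  have "(\<Sum>k\<in>UNIV. cartan_jet F l H T i $ j $ k * y$k) = 0" for j
  proof -
    have "2 * (\<Sum>k\<in>UNIV. cartan_jet F l H T i $ j $ k * y$k)
        = l$j * (\<Sum>k\<in>UNIV. H$k$i * y$k) + l$i * (\<Sum>k\<in>UNIV. H$k$j * y$k)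
          + H$i$j * (\<Sum>k\<in>UNIV. l$k * y$k) + F * (\<Sum>k\<in>UNIV. T i j k * y$k)"
      by (simp add: cartan_jet_def sum_distrib_left sum.distrib algebra_simps
          flip: sum_divide_distrib)
    then show ?thesis by (simp add: Hy' ly Ty)
  qed
  then show "cartan_jet F l H T i *v y = 0"
    by (simp add: matrix_vector_mult_def vec_eq_iff)
  have "(\<Sum>j\<in>UNIV. y$j * cartan_jet F l H T i $ j $ k) = 0" for k
  proof -
    have "2 * (\<Sum>j\<in>UNIV. y$j * cartan_jet F l H T i $ j $ k)
        = H$k$i * (\<Sum>j\<in>UNIV. l$j * y$j) + l$i * (\<Sum>j\<in>UNIV. H$k$j * y$j)
          + l$k * (\<Sum>j\<in>UNIV. H$i$j * y$j) + F * (\<Sum>j\<in>UNIV. T i k j * y$j)"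
      by (simp add: cartan_jet_def sum_distrib_left sum.distrib algebra_simps Ts
          flip: sum_divide_distrib)
    then show ?thesis by (simp add: Hy ly Ty Hs[of k i])
  qed
  then show "y v* cartan_jet F l H T i = 0"
    by (simp add: vector_matrix_mult_def vec_eq_iff)
qed

lemma matrix_inv_fund_jet_mult_H:
  assumes hom: "homogeneous_jet y F l H T" and F: "F \<noteq> 0" and inv: "invertible (fund_jet F l H)"
  shows "F *\<^sub>R (matrix_inv (fund_jet F l H) ** H) = mat 1 - outer ((1/F) *\<^sub>R y) l"
proof -
  have "matrix_inv (fund_jet F l H) *v l = (1/F) *\<^sub>R y"
    by (rule matrix_inv_mult_vector[OF inv fund_jet_mult_vector[OF hom] F])
  then show ?thesis
    using matrix_inv_left[OF inv]
    by (simp add: fund_jet_def matrix_add_ldistrib matrix_mul_outer matrix_scalar_ac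
        scalar_matrix_assoc eq_diff_eq add.commute)
qed

lemma contract_matrix_inv_fund_jet:
  fixes y :: "real^'n"
  assumes hom: "homogeneous_jet y F l H T" and F: "F \<noteq> 0"
    and inv: "invertible (fund_jet F l H)" and my: "m \<bullet> y = 0"
  shows "contract (matrix_inv (fund_jet F l H)) (\<chi> j k. H$k$i * m$j + m$i * H$k$j + m$k * H$i$j)
    = (real CARD('n) + 1) / F * m$i"
proof -
  define gi where "gi = matrix_inv (fund_jet F l H)"
  have "transpose H = H"
    using hom by (simp add: homogeneous_jet_def)
  then have H_sym: "H$j$k = H$k$j" and gi_sym: "gi$j$k = gi$k$j" for j k
    using transpose_matrix_inv[OF inv transpose_fund_jet]
    by (simp_all add: symmetric_matrix_entry gi_def)
  have giH: "(\<Sum>k\<in>UNIV. gi$j$k * H$k$r) = ((if j = r then 1 else 0) - y$j * l$r / F) / F" for j r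
    using arg_cong[OF matrix_inv_fund_jet_mult_H[OF hom F inv], of "\<lambda>M. M$j$r"] F
    by (simp add: gi_def outer_def mat_def matrix_matrix_mult_def field_simps)
  have ly: "(\<Sum>j\<in>UNIV. y$j * l$j) = F" and my': "(\<Sum>j\<in>UNIV. m$j * y$j) = 0"
    using hom my by (simp_all add: homogeneous_jet_def inner_vec_def mult.commute)
  have "(\<Sum>j\<in>UNIV. \<Sum>k\<in>UNIV. gi$j$k * H$k$j) = (\<Sum>j\<in>UNIV. 1 / F - y$j * l$j / F / F)"
    by (simp add: giH diff_divide_distrib)
  also have "\<dots> = real CARD('n) / F - (\<Sum>j\<in>UNIV. y$j * l$j) / F / F"
    by (simp add: sum_subtractf sum_divide_distrib)
  finally have trace: "(\<Sum>j\<in>UNIV. \<Sum>k\<in>UNIV. gi$j$k * H$k$j) = (real CARD('n) - 1) / F"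
    using F by (simp add: ly diff_divide_distrib)
  have "(\<Sum>j\<in>UNIV. \<Sum>k\<in>UNIV. gi$j$k * (H$k$i * m$j))
      = (\<Sum>j\<in>UNIV. m$j * (\<Sum>k\<in>UNIV. gi$j$k * H$k$i))"
    by (simp add: sum_distrib_left mult_ac)
  also have "\<dots> = (\<Sum>j\<in>UNIV. (if j = i then m$j / F else 0) - m$j * y$j * l$i / F / F)"
    using F by (intro sum.cong refl) (simp add: giH diff_divide_distrib right_diff_distrib)
  also have "\<dots> = m$i / F - (\<Sum>j\<in>UNIV. m$j * y$j) * l$i / F / F"
    by (simp add: sum_subtractf sum_divide_distrib sum_distrib_right)
  finally have first: "(\<Sum>j\<in>UNIV. \<Sum>k\<in>UNIV. gi$j$k * (H$k$i * m$j)) = m$i / F"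
    by (simp add: my')
  have last: "(\<Sum>j\<in>UNIV. \<Sum>k\<in>UNIV. gi$j$k * (m$k * H$i$j)) = m$i / F"
    using first by (subst (asm) sum.swap) (simp add: gi_sym H_sym mult_ac)
  show ?thesis
    using trace first last F
    unfolding contract_def gi_def[symmetric]
    by (simp add: algebra_simps sum.distrib flip: sum_distrib_left) (simp add: field_simps)
qed

lemma fund_jet_scaleR: "fund_jet (c * F) (c *\<^sub>R l) (c *\<^sub>R H) = c\<^sup>2 *\<^sub>R fund_jet F l H"
  by (simp add: fund_jet_def outer_def vec_eq_iff power2_eq_square algebra_simps)

lemma torsion_jet_scaleR:
  assumes "c \<noteq> 0" "invertible (fund_jet F l H)"
  shows "torsion_jet (c * F) (c *\<^sub>R l) (c *\<^sub>R H) (\<lambda>i j k. c * T i j k) i = torsion_jet F l H T i"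
proof -
  have "cartan_jet (c * F) (c *\<^sub>R l) (c *\<^sub>R H) (\<lambda>i j k. c * T i j k) i
      = c\<^sup>2 *\<^sub>R cartan_jet F l H T i"
    by (simp add: cartan_jet_def vec_eq_iff power2_eq_square algebra_simps add_divide_distrib)
  then show ?thesis
    using assms by (simp add: torsion_jet_def fund_jet_scaleR matrix_inv_scaleR contract_scaleR_left
        contract_scaleR_right)
qed

theorem torsion_jet_add_linear:
  fixes y :: "real^'n"
  assumes hom: "homogeneous_jet y F l H T" and F: "F \<noteq> 0" and G: "F + b \<bullet> y \<noteq> 0"
    and inv: "invertible (fund_jet F l H)" "invertible (fund_jet (F + b \<bullet> y) (l + b) H)"
  shows "torsion_jet (F + b \<bullet> y) (l + b) H T i
    = torsion_jet F l H T i + (real CARD('n) + 1) / (2 * (F + b \<bullet> y)) * (b$i - (b \<bullet> y) / F * l$i)"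
proof -
  define G where "G = F + b \<bullet> y"
  define k where "k = G / F"
  define m where "m = b - ((b \<bullet> y) / F) *\<^sub>R l"
  have k: "k \<noteq> 0" using F G by (simp add: k_def G_def)
  have hom': "homogeneous_jet y G (l + b) H T"
    unfolding G_def by (rule homogeneous_jet_add_linear[OF hom])
  have my: "m \<bullet> y = 0"
    using hom F by (simp add: m_def homogeneous_jet_def inner_diff_left)
  have cartan: "cartan_jet G (l + b) H T i = k *\<^sub>R cartan_jet F l H T i
      + (1/2) *\<^sub>R (\<chi> j q. H$q$i * m$j + m$i * H$q$j + m$q * H$i$j)"
    using F by (simp add: cartan_jet_def vec_eq_iff m_def k_def G_def inner_add_left field_simps)
  have "k *\<^sub>R fund_jet F l H - fund_jet G (l + b) H = outer (k *\<^sub>R l) l - outer (l + b) (l + b)"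
    using F by (simp add: fund_jet_def outer_def vec_eq_iff k_def G_def field_simps)
  moreover have "k *\<^sub>R fund_jet F l H *v y = G *\<^sub>R l"
    using F by (simp add: fund_jet_mult_vector[OF hom] k_def flip: scaleR_matrix_vector_assoc)
  ultimately have "torsion_jet G (l + b) H T i
      = contract (matrix_inv (k *\<^sub>R fund_jet F l H)) (cartan_jet G (l + b) H T i)"
    unfolding torsion_jet_def
    using G inv k cartan_jet_mult_vector[OF hom'] fund_jet_mult_vector[OF hom']
    by (intro contract_matrix_inv_eq) (auto simp: G_def scalar_invertible transpose_scalar
        transpose_fund_jet hom[unfolded homogeneous_jet_def])
  also have "\<dots> = torsion_jet F l H T i + (real CARD('n) + 1) / (2 * k * F) * m$i"
    using k inv contract_matrix_inv_fund_jet[OF hom F inv(1) my]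
    by (simp add: cartan matrix_inv_scaleR contract_scaleR_left contract_add_right
        contract_scaleR_right torsion_jet_def)
  finally show ?thesis
    using F by (simp add: G_def k_def m_def)
qed

theorem torsion_jet_conformal_add_linear:
  fixes y :: "real^'n"
  assumes hom: "homogeneous_jet y F l H T" and c: "c \<noteq> 0" and F: "F \<noteq> 0"
    and G: "c * F + b \<bullet> y \<noteq> 0" and inv: "invertible (fund_jet F l H)"
    "invertible (fund_jet (c * F + b \<bullet> y) (c *\<^sub>R l + b) (c *\<^sub>R H))"
  shows "torsion_jet (c * F + b \<bullet> y) (c *\<^sub>R l + b) (c *\<^sub>R H) (\<lambda>i j k. c * T i j k) i
    = torsion_jet F l H T i + (real CARD('n) + 1) / (2 * (c * F + b \<bullet> y)) * (b$i - (b \<bullet> y) / F * l$i)"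
proof -
  have "torsion_jet (c * F + b \<bullet> y) (c *\<^sub>R l + b) (c *\<^sub>R H) (\<lambda>i j k. c * T i j k) i
    = torsion_jet (c * F) (c *\<^sub>R l) (c *\<^sub>R H) (\<lambda>i j k. c * T i j k) i
      + (real CARD('n) + 1) / (2 * (c * F + b \<bullet> y)) * (b$i - (b \<bullet> y) / (c * F) * (c *\<^sub>R l)$i)"
    using c F G inv
    by (intro torsion_jet_add_linear[OF homogeneous_jet_scaleR[OF hom]])
      (simp_all add: fund_jet_scaleR scalar_invertible)
  then show ?thesis
    using c inv(1) by (simp add: torsion_jet_scaleR)
qed

section \<open>Partial derivatives in the fibre coordinates\<close>

lemma axis_in_Basis_vec: "axis i 1 \<in> (Basis :: (real^'n) set)"
  by (auto simp: Basis_vec_def)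

lemma iter_dirder_dirder: "iter_dirder (dirder f v) vs = iter_dirder f (vs @ [v])"
  by (induction vs) auto

lemma smooth_on_dirder: "smooth_on S f \<Longrightarrow> v \<in> Basis \<Longrightarrow> smooth_on S (dirder f v)"
  unfolding smooth_on_def iter_dirder_dirder by simp

lemma smooth_on_ypd: "smooth_on S h \<Longrightarrow> smooth_on S (ypd h i)"
  unfolding ypd_def by (rule smooth_on_dirder[OF _ axis_in_Basis_vec])

lemma smooth_on_imp_continuous_on: "smooth_on S f \<Longrightarrow> continuous_on S f"
  unfolding smooth_on_def by (metis empty_subsetI iter_dirder.simps(1) list.set(1))

lemma smooth_on_imp_differentiable:
  "smooth_on S f \<Longrightarrow> v \<in> Basis \<Longrightarrow> p \<in> S \<Longrightarrow> (\<lambda>t. f (p + t *\<^sub>R v)) differentiable (at 0)"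
  unfolding smooth_on_def by (metis empty_subsetI iter_dirder.simps(1) list.set(1))

lemma smooth_on_slice:
  fixes f :: "'a::euclidean_space \<times> 'b::euclidean_space \<Rightarrow> real"
  assumes f: "smooth_on (U \<times> W) f" and x: "x \<in> U"
  shows "smooth_on W (\<lambda>y. f (x, y))"
proof -
  have iter: "iter_dirder (\<lambda>y. f (x', y)) vs y = iter_dirder f (map (\<lambda>v. (0, v)) vs) (x', y)"
    for vs x' y
    by (induction vs arbitrary: x' y) (simp_all add: dirder_def)
  have basis: "set vs \<subseteq> Basis \<Longrightarrow> set (map (\<lambda>v. (0::'a, v)) vs) \<subseteq> Basis" for vs
    by (auto simp: Basis_prod_def)
  show ?thesis
    unfolding smooth_on_def
  proof (intro allI impI conjI ballI)
    fix vs :: "'b list" assume vs: "set vs \<subseteq> Basis"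
    have "continuous_on (U \<times> W) (iter_dirder f (map (\<lambda>v. (0, v)) vs))"
      using f basis[OF vs] unfolding smooth_on_def by blast
    then show "continuous_on W (iter_dirder (\<lambda>y. f (x, y)) vs)"
      unfolding iter by (rule continuous_on_compose2) (auto intro!: continuous_intros simp: x)
    fix v :: 'b and p assume "v \<in> Basis" "p \<in> W"
    moreover from \<open>v \<in> Basis\<close> have "(0::'a, v) \<in> Basis"
      by (simp add: Basis_prod_def)
    ultimately have "(\<lambda>t. iter_dirder f (map (\<lambda>v. (0, v)) vs) ((x, p) + t *\<^sub>R (0, v))) differentiable (at 0)"
      using f basis[OF vs] x unfolding smooth_on_def by blast
    then show "(\<lambda>t. iter_dirder (\<lambda>y. f (x, y)) vs (p + t *\<^sub>R v)) differentiable (at 0)"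
      by (simp add: iter)
  qed
qed

lemma has_real_derivative_ypd:
  assumes "smooth_on S h" "p \<in> S"
  shows "((\<lambda>t. h (p + t *\<^sub>R axis j 1)) has_real_derivative ypd h j p) (at 0)"
  unfolding ypd_def dirder_def
  using smooth_on_imp_differentiable[OF assms(1) axis_in_Basis_vec assms(2)]
  by (simp add: DERIV_deriv_iff_real_differentiable)

lemma has_real_derivative_ypd_at:
  assumes "smooth_on S h" "p + s *\<^sub>R axis j 1 \<in> S"
  shows "((\<lambda>t. h (p + t *\<^sub>R axis j 1)) has_real_derivative ypd h j (p + s *\<^sub>R axis j 1)) (at s)"
proof -
  have "((\<lambda>t. h (p + (t + s) *\<^sub>R axis j 1)) has_real_derivative ypd h j (p + s *\<^sub>R axis j 1)) (at 0)"
    using has_real_derivative_ypd[OF assms] by (simp add: scaleR_add_left add_ac)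
  then show ?thesis
    using DERIV_shift[of "\<lambda>t. h (p + t *\<^sub>R axis j 1)" _ 0 s] by simp
qed

lemma ypd_eqI: "((\<lambda>t. h (p + t *\<^sub>R axis j 1)) has_real_derivative D) (at 0) \<Longrightarrow> ypd h j p = D"
  unfolding ypd_def dirder_def by (rule DERIV_imp_deriv)

lemma ypd_cong:
  assumes "open S" "p \<in> S" "\<And>z. z \<in> S \<Longrightarrow> f z = g z"
  shows "ypd f j p = ypd g j p"
proof -
  have "((\<lambda>t::real. p + t *\<^sub>R axis j 1) \<longlongrightarrow> p) (nhds 0)"
    using filterlim_ident[of "nhds (0::real)"] by (auto intro!: tendsto_eq_intros)
  then have "\<forall>\<^sub>F t in nhds 0. p + t *\<^sub>R axis j 1 \<in> S"
    using assms(1,2) by (rule topological_tendstoD)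
  then have "\<forall>\<^sub>F t in nhds 0. f (p + t *\<^sub>R axis j 1) = g (p + t *\<^sub>R axis j 1)"
    by eventually_elim (simp add: assms(3))
  then show ?thesis
    unfolding ypd_def dirder_def by (rule deriv_cong_ev[OF _ refl])
qed

lemma ypd_mult:
  assumes "smooth_on S f" "smooth_on S g" "p \<in> S"
  shows "ypd (\<lambda>z. f z * g z) i p = ypd f i p * g p + f p * ypd g i p"
  by (rule ypd_eqI)
    (use DERIV_mult[OF has_real_derivative_ypd[OF assms(1,3)] has_real_derivative_ypd[OF assms(2,3)]]
      in \<open>simp add: mult.commute\<close>)

lemma ypd_mult_add_mult:
  assumes "smooth_on S f1" "smooth_on S g1" "smooth_on S f2" "smooth_on S g2" "p \<in> S"
  shows "ypd (\<lambda>z. f1 z * g1 z + f2 z * g2 z) i p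
    = ypd f1 i p * g1 p + f1 p * ypd g1 i p + (ypd f2 i p * g2 p + f2 p * ypd g2 i p)"
  by (rule ypd_eqI)
    (use DERIV_add[OF
        DERIV_mult[OF has_real_derivative_ypd[OF assms(1,5)] has_real_derivative_ypd[OF assms(2,5)]]
        DERIV_mult[OF has_real_derivative_ypd[OF assms(3,5)] has_real_derivative_ypd[OF assms(4,5)]]]
      in \<open>simp add: mult.commute\<close>)

lemma ypd_cmult_add_inner:
  assumes "smooth_on S f" "p \<in> S"
  shows "ypd (\<lambda>z. c * f z + b \<bullet> z) i p = c * ypd f i p + b$i"
proof (rule ypd_eqI)
  have "(\<lambda>t. b \<bullet> (p + t *\<^sub>R axis i 1)) = (\<lambda>t. b \<bullet> p + t * b$i)"
    by (simp add: fun_eq_iff inner_add_right inner_axis)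
  then have "((\<lambda>t. b \<bullet> (p + t *\<^sub>R axis i 1)) has_real_derivative b$i) (at 0)"
    by (auto intro!: derivative_eq_intros)
  then show "((\<lambda>t. c * f (p + t *\<^sub>R axis i 1) + b \<bullet> (p + t *\<^sub>R axis i 1)) has_real_derivative
      c * ypd f i p + b$i) (at 0)"
    by (intro DERIV_add DERIV_cmult has_real_derivative_ypd[OF assms])
qed

lemma ypd_cmult_add_const:
  assumes "smooth_on S f" "p \<in> S"
  shows "ypd (\<lambda>z. c * f z + a) i p = c * ypd f i p"
  by (rule ypd_eqI)
    (use DERIV_add[OF DERIV_cmult[OF has_real_derivative_ypd[OF assms]] DERIV_const] in simp)

definition ygrad :: "(real^'n \<Rightarrow> real) \<Rightarrow> real^'n \<Rightarrow> real^'n" where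
  "ygrad h y = (\<chi> k. ypd h k y)"

definition yhess :: "(real^'n \<Rightarrow> real) \<Rightarrow> real^'n \<Rightarrow> real^'n^'n" where
  "yhess h y = (\<chi> i j. ypd (ypd h j) i y)"

definition ythird :: "(real^'n \<Rightarrow> real) \<Rightarrow> real^'n \<Rightarrow> 'n \<Rightarrow> 'n \<Rightarrow> 'n \<Rightarrow> real" where
  "ythird h y i j k = ypd (ypd (ypd h j) i) k y"

lemma MVT_abs:
  fixes f f' :: "real \<Rightarrow> real"
  assumes "\<And>t. \<bar>t\<bar> \<le> \<bar>b\<bar> \<Longrightarrow> (f has_real_derivative f' t) (at t)"
  shows "\<exists>z. \<bar>z\<bar> \<le> \<bar>b\<bar> \<and> f b - f 0 = b * f' z"
proof (cases b "0::real" rule: linorder_cases)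
  case less
  then obtain z where "b < z" "z < 0" "f 0 - f b = (0 - b) * f' z"
    using MVT2[OF less, of f f'] assms by fastforce
  then show ?thesis by (intro exI[of _ z]) (auto simp: algebra_simps)
next
  case greater
  then obtain z where "0 < z" "z < b" "f b - f 0 = (b - 0) * f' z"
    using MVT2[OF greater, of f f'] assms by fastforce
  then show ?thesis by (intro exI[of _ z]) auto
qed auto

lemma ypd_line_increment_bound:
  fixes h :: "real^'n \<Rightarrow> real"
  assumes sm: "smooth_on S h"
    and near: "\<And>t. \<bar>t\<bar> \<le> \<bar>a\<bar> \<Longrightarrow> p + t *\<^sub>R axis q 1 \<in> S \<and> \<bar>ypd h q (p + t *\<^sub>R axis q 1) - c\<bar> \<le> e"
  shows "\<bar>h (p + a *\<^sub>R axis q 1) - h p - a * c\<bar> \<le> e * \<bar>a\<bar>"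
proof -
  have "((\<lambda>t. h (p + t *\<^sub>R axis q 1)) has_real_derivative ypd h q (p + t *\<^sub>R axis q 1)) (at t)"
    if "\<bar>t\<bar> \<le> \<bar>a\<bar>" for t
    by (rule has_real_derivative_ypd_at[OF sm]) (use near[OF that] in blast)
  from MVT_abs[OF this] obtain t where t: "\<bar>t\<bar> \<le> \<bar>a\<bar>"
    and mvt: "h (p + a *\<^sub>R axis q 1) - h (p + 0 *\<^sub>R axis q 1) = a * ypd h q (p + t *\<^sub>R axis q 1)"
    by blast
  have "\<bar>h (p + a *\<^sub>R axis q 1) - h p - a * c\<bar> = \<bar>a\<bar> * \<bar>ypd h q (p + t *\<^sub>R axis q 1) - c\<bar>"
    using mvt by (simp add: abs_mult[symmetric] right_diff_distrib)
  also have "\<dots> \<le> \<bar>a\<bar> * e"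
    using near[OF t] by (intro mult_left_mono) auto
  finally show ?thesis
    by (simp add: mult.commute)
qed

text \<open>Walk from \<open>y\<close> to \<open>y + v\<close> one coordinate at a time.\<close>
lemma ypd_increment_bound:
  fixes h :: "real^'n \<Rightarrow> real"
  assumes sm: "smooth_on S h"
    and near: "\<And>z. dist z y < d \<Longrightarrow> z \<in> S \<and> (\<forall>k. \<bar>ypd h k z - ypd h k y\<bar> < e)"
    and v: "norm v < d"
  shows "\<bar>h (y + v) - h y - ygrad h y \<bullet> v\<bar> \<le> e * (\<Sum>k\<in>UNIV. \<bar>v$k\<bar>)"
proof -
  define vK where "vK K = (\<chi> k. if k \<in> K then v$k else 0)" for K
  have partial: "\<bar>h (y + vK K) - h y - (\<Sum>k\<in>K. v$k * ypd h k y)\<bar> \<le> e * (\<Sum>k\<in>K. \<bar>v$k\<bar>)"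
    if "finite K" for K
    using that
  proof (induction K rule: finite_induct)
    case empty
    have "vK {} = 0" by (simp add: vK_def vec_eq_iff)
    then show ?case by simp
  next
    case (insert q K)
    have step: "\<bar>h (y + vK K + v$q *\<^sub>R axis q 1) - h (y + vK K) - v$q * ypd h q y\<bar> \<le> e * \<bar>v$q\<bar>"
    proof (rule ypd_line_increment_bound[OF sm])
      fix t assume "\<bar>t\<bar> \<le> \<bar>v$q\<bar>"
      then have "norm (vK K + t *\<^sub>R axis q 1) \<le> norm v"
        using insert.hyps by (intro norm_le_componentwise_cart) (auto simp: vK_def axis_def)
      then show "y + vK K + t *\<^sub>R axis q 1 \<in> S \<and> \<bar>ypd h q (y + vK K + t *\<^sub>R axis q 1) - ypd h q y\<bar> \<le> e"
        using near v by (simp add: dist_norm add.assoc less_imp_le)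
    qed
    have "vK (insert q K) = vK K + v$q *\<^sub>R axis q 1"
      using insert.hyps by (auto simp: vK_def vec_eq_iff axis_def)
    then have "h (y + vK (insert q K)) - h y - (\<Sum>k\<in>insert q K. v$k * ypd h k y)
        = (h (y + vK K) - h y - (\<Sum>k\<in>K. v$k * ypd h k y))
          + (h (y + vK K + v$q *\<^sub>R axis q 1) - h (y + vK K) - v$q * ypd h q y)"
      using insert.hyps by (simp add: add.assoc)
    then show ?case
      using insert.IH step insert.hyps by (simp add: distrib_left)
  qed
  have "vK UNIV = v" "ygrad h y \<bullet> v = (\<Sum>k\<in>UNIV. v$k * ypd h k y)"
    by (simp_all add: vK_def vec_eq_iff ygrad_def inner_vec_def mult.commute)
  then show ?thesis
    using partial[of UNIV] by simp
qed

lemma continuous_on_imp_eventually_near: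
  fixes g :: "real^'n \<Rightarrow> real"
  assumes "open S" "continuous_on S g" "y \<in> S" "e > 0"
  shows "\<forall>\<^sub>F z in nhds y. \<bar>g z - g y\<bar> < e"
proof -
  have "isCont g y"
    using assms(1-3) continuous_on_eq_continuous_at by blast
  then have "(g \<longlongrightarrow> g y) (nhds y)"
    unfolding isCont_def by (rule tendsto_at_iff_tendsto_nhds[THEN iffD1])
  from tendstoD[OF this assms(4)] show ?thesis
    by (simp add: dist_real_def)
qed

lemma has_derivative_ygrad:
  fixes h :: "real^'n \<Rightarrow> real"
  assumes S: "open S" and sm: "smooth_on S h" and y: "y \<in> S"
  shows "(h has_derivative (\<lambda>v. ygrad h y \<bullet> v)) (at y)"
  unfolding has_derivative_at_alt
proof (intro conjI allI impI)
  show "bounded_linear (\<lambda>v. ygrad h y \<bullet> v)"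
    by (rule bounded_linear_inner_right)
  fix e :: real assume e: "e > 0"
  define e' where "e' = e / real CARD('n)"
  have e': "e' > 0" using e by (simp add: e'_def)
  have "\<forall>\<^sub>F z in nhds y. z \<in> S \<and> (\<forall>k. \<bar>ypd h k z - ypd h k y\<bar> < e')"
    using eventually_nhds_in_open[OF S y]
      continuous_on_imp_eventually_near[OF S smooth_on_imp_continuous_on[OF smooth_on_ypd[OF sm]]
        y e']
    by (simp add: eventually_conj_iff eventually_all_finite)
  then obtain d where d: "d > 0"
    and near: "\<And>z. dist z y < d \<Longrightarrow> z \<in> S \<and> (\<forall>k. \<bar>ypd h k z - ypd h k y\<bar> < e')"
    unfolding eventually_nhds_metric by blast
  show "\<exists>d>0. \<forall>z. norm (z - y) < d \<longrightarrow> norm (h z - h y - ygrad h y \<bullet> (z - y)) \<le> e * norm (z - y)"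
  proof (intro exI[of _ d] conjI allI impI d)
    fix z assume z: "norm (z - y) < d"
    have "(\<Sum>k\<in>UNIV. \<bar>(z - y)$k\<bar>) \<le> (\<Sum>k\<in>(UNIV::'n set). norm (z - y))"
      by (intro sum_mono) (rule component_le_norm_cart)
    then have "e' * (\<Sum>k\<in>UNIV. \<bar>(z - y)$k\<bar>) \<le> e' * (real CARD('n) * norm (z - y))"
      using e' by (intro mult_left_mono) auto
    also have "\<dots> = e * norm (z - y)"
      by (simp add: e'_def)
    finally have "e' * (\<Sum>k\<in>UNIV. \<bar>(z - y)$k\<bar>) \<le> e * norm (z - y)" .
    with ypd_increment_bound[OF sm near z] show "norm (h z - h y - ygrad h y \<bullet> (z - y)) \<le> e * norm (z - y)"
      by simp
  qed
qed

lemma second_difference_eq: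
  fixes h :: "real^'n \<Rightarrow> real"
  assumes sm: "smooth_on S h" and near: "\<And>z. dist z y < d \<Longrightarrow> z \<in> S" and s: "2 * \<bar>s\<bar> < d"
  obtains \<xi> where "dist \<xi> y \<le> 2 * \<bar>s\<bar>"
    "h (y + s *\<^sub>R axis i 1 + s *\<^sub>R axis j 1) - h (y + s *\<^sub>R axis i 1) - h (y + s *\<^sub>R axis j 1) + h y
      = s\<^sup>2 * ypd (ypd h i) j \<xi>"
proof -
  have dist_le: "dist (y + t *\<^sub>R axis i 1 + r *\<^sub>R axis j 1) y \<le> \<bar>t\<bar> + \<bar>r\<bar>" for t r
    using norm_triangle_ineq[of "t *\<^sub>R axis i (1::real)" "r *\<^sub>R axis j (1::real)"]
    by (simp add: dist_norm add.assoc)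
  have inS: "y + t *\<^sub>R axis i 1 + r *\<^sub>R axis j 1 \<in> S" if "\<bar>t\<bar> \<le> \<bar>s\<bar>" "\<bar>r\<bar> \<le> \<bar>s\<bar>" for t r
  proof (rule near)
    show "dist (y + t *\<^sub>R axis i 1 + r *\<^sub>R axis j 1) y < d"
      using dist_le[of t r] that s by linarith
  qed
  define u where "u t = h ((y + s *\<^sub>R axis j 1) + t *\<^sub>R axis i 1) - h (y + t *\<^sub>R axis i 1)" for t
  have du: "(u has_real_derivative
      ypd h i ((y + s *\<^sub>R axis j 1) + t *\<^sub>R axis i 1) - ypd h i (y + t *\<^sub>R axis i 1)) (at t)"
    if "\<bar>t\<bar> \<le> \<bar>s\<bar>" for t
  proof -
    have "(y + s *\<^sub>R axis j 1) + t *\<^sub>R axis i 1 \<in> S" "y + t *\<^sub>R axis i 1 \<in> S"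
      using inS[OF that, of s] inS[OF that, of 0] by (simp_all add: add_ac)
    then show ?thesis
      unfolding u_def[abs_def] by (intro DERIV_diff has_real_derivative_ypd_at[OF sm])
  qed
  obtain t where t: "\<bar>t\<bar> \<le> \<bar>s\<bar>"
    and u: "u s - u 0 = s * (ypd h i ((y + s *\<^sub>R axis j 1) + t *\<^sub>R axis i 1) - ypd h i (y + t *\<^sub>R axis i 1))"
    using MVT_abs[OF du] by blast
  define w where "w r = ypd h i ((y + t *\<^sub>R axis i 1) + r *\<^sub>R axis j 1)" for r
  have dw: "(w has_real_derivative ypd (ypd h i) j ((y + t *\<^sub>R axis i 1) + r *\<^sub>R axis j 1)) (at r)"
    if "\<bar>r\<bar> \<le> \<bar>s\<bar>" for r
    unfolding w_def[abs_def] using inS[OF t that]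
    by (intro has_real_derivative_ypd_at[OF smooth_on_ypd[OF sm]])
  obtain r where r: "\<bar>r\<bar> \<le> \<bar>s\<bar>"
    and w: "w s - w 0 = s * ypd (ypd h i) j ((y + t *\<^sub>R axis i 1) + r *\<^sub>R axis j 1)"
    using MVT_abs[OF dw] by blast
  have "dist ((y + t *\<^sub>R axis i 1) + r *\<^sub>R axis j 1) y \<le> 2 * \<bar>s\<bar>"
    using dist_le[of t r] t r by linarith
  moreover
  have swap: "(y + s *\<^sub>R axis j 1) + t *\<^sub>R axis i 1 = (y + t *\<^sub>R axis i 1) + s *\<^sub>R axis j 1"
    "(y + s *\<^sub>R axis j 1) + s *\<^sub>R axis i 1 = y + s *\<^sub>R axis i 1 + s *\<^sub>R axis j 1"
    by (simp_all add: algebra_simps)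
  have "h (y + s *\<^sub>R axis i 1 + s *\<^sub>R axis j 1) - h (y + s *\<^sub>R axis i 1)
      - h (y + s *\<^sub>R axis j 1) + h y = s\<^sup>2 * ypd (ypd h i) j ((y + t *\<^sub>R axis i 1) + r *\<^sub>R axis j 1)"
    using u w unfolding u_def w_def swap by (simp add: power2_eq_square)
  ultimately show ?thesis
    by (rule that)
qed

text \<open>The mixed second difference at scale \<open>s\<close> is \<open>s\<^sup>2\<close> times \<open>\<partial>\<^sub>j\<partial>\<^sub>i h\<close> and
  also \<open>s\<^sup>2\<close> times \<open>\<partial>\<^sub>i\<partial>\<^sub>j h\<close> at points near \<open>y\<close>; continuity forces equality.\<close>
theorem ypd_commute:
  fixes h :: "real^'n \<Rightarrow> real"
  assumes S: "open S" and sm: "smooth_on S h" and y: "y \<in> S"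
  shows "ypd (ypd h i) j y = ypd (ypd h j) i y"
proof (rule ccontr)
  let ?D1 = "ypd (ypd h i) j" and ?D2 = "ypd (ypd h j) i"
  assume ne: "?D1 y \<noteq> ?D2 y"
  define e where "e = \<bar>?D1 y - ?D2 y\<bar> / 2"
  have e: "e > 0" using ne by (simp add: e_def)
  have "\<forall>\<^sub>F z in nhds y. z \<in> S \<and> \<bar>?D1 z - ?D1 y\<bar> < e \<and> \<bar>?D2 z - ?D2 y\<bar> < e"
    using eventually_nhds_in_open[OF S y]
      continuous_on_imp_eventually_near[OF S _ y e, of ?D1]
      continuous_on_imp_eventually_near[OF S _ y e, of ?D2]
    by (simp add: eventually_conj_iff smooth_on_imp_continuous_on smooth_on_ypd sm)
  then obtain d where d: "d > 0"
    and near: "\<And>z. dist z y < d \<Longrightarrow> z \<in> S \<and> \<bar>?D1 z - ?D1 y\<bar> < e \<and> \<bar>?D2 z - ?D2 y\<bar> < e"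
    unfolding eventually_nhds_metric by blast
  define s where "s = d / 4"
  have s: "2 * \<bar>s\<bar> < d" "s \<noteq> 0" using d by (auto simp: s_def)
  have nearS: "\<And>z. dist z y < d \<Longrightarrow> z \<in> S"
    using near by blast
  obtain \<xi> where \<xi>: "dist \<xi> y \<le> 2 * \<bar>s\<bar>"
    and e1: "h (y + s *\<^sub>R axis i 1 + s *\<^sub>R axis j 1) - h (y + s *\<^sub>R axis i 1)
      - h (y + s *\<^sub>R axis j 1) + h y = s\<^sup>2 * ?D1 \<xi>"
    by (rule second_difference_eq[OF sm nearS s(1)])
  obtain \<eta> where \<eta>: "dist \<eta> y \<le> 2 * \<bar>s\<bar>"
    and e2: "h (y + s *\<^sub>R axis j 1 + s *\<^sub>R axis i 1) - h (y + s *\<^sub>R axis j 1)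
      - h (y + s *\<^sub>R axis i 1) + h y = s\<^sup>2 * ?D2 \<eta>"
    by (rule second_difference_eq[OF sm nearS s(1)])
  have swap: "y + s *\<^sub>R axis j 1 + s *\<^sub>R axis i 1 = y + s *\<^sub>R axis i 1 + s *\<^sub>R axis j 1"
    by (simp add: add_ac)
  have "s\<^sup>2 * ?D1 \<xi> = s\<^sup>2 * ?D2 \<eta>"
    using e1 e2[unfolded swap] by linarith
  then have "?D1 \<xi> = ?D2 \<eta>"
    using s(2) by simp
  moreover have "\<bar>?D1 \<xi> - ?D1 y\<bar> < e" "\<bar>?D2 \<eta> - ?D2 y\<bar> < e"
    using near[of \<xi>] near[of \<eta>] \<xi> \<eta> s(1) by linarith+
  ultimately have "\<bar>?D1 y - ?D2 y\<bar> < 2 * e"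
    unfolding abs_less_iff by linarith
  then show False
    by (simp add: e_def)
qed

theorem euler_homogeneous:
  fixes h :: "real^'n \<Rightarrow> real"
  assumes S: "open S" and sm: "smooth_on S h" and y: "y \<in> S"
    and hom: "\<And>t. t > 0 \<Longrightarrow> h (t *\<^sub>R y) = t powr d * h y"
  shows "ygrad h y \<bullet> y = d * h y"
proof -
  have "((\<lambda>t. t *\<^sub>R y) has_derivative (\<lambda>s. s *\<^sub>R y)) (at 1)"
    by (auto intro!: derivative_eq_intros)
  moreover have "(h has_derivative (\<lambda>v. ygrad h y \<bullet> v)) (at ((\<lambda>t. t *\<^sub>R y) 1))"
    using has_derivative_ygrad[OF S sm y] by simp
  ultimately have "((\<lambda>t. h (t *\<^sub>R y)) has_derivative (\<lambda>s. ygrad h y \<bullet> (s *\<^sub>R y))) (at 1)"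
    by (rule has_derivative_compose)
  moreover have "(\<lambda>s. ygrad h y \<bullet> (s *\<^sub>R y)) = (*) (ygrad h y \<bullet> y)"
    by (simp add: fun_eq_iff)
  ultimately have D1: "((\<lambda>t. h (t *\<^sub>R y)) has_real_derivative ygrad h y \<bullet> y) (at 1)"
    by (simp add: has_field_derivative_def)
  have "((\<lambda>t. t powr d * h y) has_real_derivative d * 1 powr (d - 1) * h y) (at 1)"
    by (intro DERIV_cmult_right has_real_derivative_powr) simp
  moreover have "\<forall>\<^sub>F t in nhds 1. t powr d * h y = h (t *\<^sub>R y)"
  proof -
    have "\<forall>\<^sub>F t in nhds 1. (t::real) > 0"
      by (rule eventually_nhds_in_open[of "{0<..}", simplified]) auto
    then show ?thesis
      by eventually_elim (simp add: hom)
  qed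
  ultimately have D2: "((\<lambda>t. h (t *\<^sub>R y)) has_real_derivative d * h y) (at 1)"
    using DERIV_cong_ev[OF refl _ refl] by fastforce
  show ?thesis
    using DERIV_unique[OF D1 D2] .
qed

lemma ypd_homogeneous:
  fixes h :: "real^'n \<Rightarrow> real"
  assumes S: "open S" and sm: "smooth_on S h"
    and hom: "\<And>z t. z \<in> S \<Longrightarrow> t > 0 \<Longrightarrow> h (t *\<^sub>R z) = t powr d * h z"
    and z: "z \<in> S" and t: "t > 0"
  shows "ypd h i (t *\<^sub>R z) = t powr (d - 1) * ypd h i z"
proof (rule ypd_eqI)
  have "((\<lambda>s. t powr d * h (z + (s / t) *\<^sub>R axis i 1)) has_real_derivative
      t powr d * (ypd h i z * (1 / t))) (at 0)"
    using has_real_derivative_ypd[OF sm z] t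
    by (intro DERIV_cmult DERIV_chain2[where g = "\<lambda>s. s / t"]) (auto intro!: derivative_eq_intros)
  moreover have "\<forall>\<^sub>F s in nhds 0. t powr d * h (z + (s / t) *\<^sub>R axis i 1) = h (t *\<^sub>R z + s *\<^sub>R axis i 1)"
  proof -
    have "((\<lambda>s::real. z + (s / t) *\<^sub>R axis i 1) \<longlongrightarrow> z) (nhds 0)"
      using filterlim_ident[of "nhds (0::real)"] t by (auto intro!: tendsto_eq_intros)
    then have "\<forall>\<^sub>F s in nhds 0. z + (s / t) *\<^sub>R axis i 1 \<in> S"
      using S z by (rule topological_tendstoD)
    then show ?thesis
    proof eventually_elim
      case (elim s)
      have "t *\<^sub>R (z + (s / t) *\<^sub>R axis i 1) = t *\<^sub>R z + s *\<^sub>R axis i 1"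
        using t by (simp add: scaleR_add_right)
      then show ?case
        using hom[OF elim t] by simp
    qed
  qed
  moreover have "t powr d * (ypd h i z * (1 / t)) = t powr (d - 1) * ypd h i z"
    using t by (simp add: powr_diff)
  ultimately show "((\<lambda>s. h (t *\<^sub>R z + s *\<^sub>R axis i 1)) has_real_derivative t powr (d - 1) * ypd h i z) (at 0)"
    using DERIV_cong_ev[OF refl _ refl] by fastforce
qed

section \<open>Finsler metrics\<close>

lemma fund_eq_fund_jet:
  fixes L :: "real^'n \<Rightarrow> real^'n \<Rightarrow> real"
  assumes V: "open V" and sm: "smooth_on V (L x)" and y: "y \<in> V"
  shows "fund L x y = fund_jet (L x y) (ygrad (L x) y) (yhess (L x) y)"
proof -
  have sq: "ypd (\<lambda>w. (L x w)\<^sup>2) j z = L x z * ypd (L x) j z + L x z * ypd (L x) j z"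
    if "z \<in> V" for j z
    using ypd_mult[OF sm sm that, of j] by (simp add: power2_eq_square mult.commute)
  have "ypd (\<lambda>z. ypd (\<lambda>w. (L x w)\<^sup>2) j z) i y
      = ypd (\<lambda>z. L x z * ypd (L x) j z + L x z * ypd (L x) j z) i y" for i j
    by (rule ypd_cong[OF V y]) (rule sq)
  also have "\<dots> i j = ypd (L x) i y * ypd (L x) j y + L x y * ypd (ypd (L x) j) i y
      + (ypd (L x) i y * ypd (L x) j y + L x y * ypd (ypd (L x) j) i y)" for i j
    by (rule ypd_mult_add_mult[OF sm smooth_on_ypd[OF sm] sm smooth_on_ypd[OF sm] y])
  finally show ?thesis
    by (simp add: fund_def fund_jet_def outer_def ygrad_def yhess_def vec_eq_iff)
qed

lemma cartan_eq_cartan_jet: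
  fixes L :: "real^'n \<Rightarrow> real^'n \<Rightarrow> real"
  assumes V: "open V" and sm: "smooth_on V (L x)" and y: "y \<in> V"
  shows "cartan L x y i j k
    = cartan_jet (L x y) (ygrad (L x) y) (yhess (L x) y) (ythird (L x) y) i $ j $ k"
proof -
  have "ypd (\<lambda>z. fund L x z $ i $ j) k y
      = ypd (\<lambda>z. ypd (L x) i z * ypd (L x) j z + L x z * ypd (ypd (L x) j) i z) k y"
    by (rule ypd_cong[OF V y])
      (simp add: fund_eq_fund_jet[where L = L and x = x, OF V sm] fund_jet_def outer_def
        ygrad_def yhess_def)
  also have "\<dots> = ypd (ypd (L x) i) k y * ypd (L x) j y + ypd (L x) i y * ypd (ypd (L x) j) k y
      + (ypd (L x) k y * ypd (ypd (L x) j) i y + L x y * ypd (ypd (ypd (L x) j) i) k y)"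
    by (rule ypd_mult_add_mult[OF smooth_on_ypd[OF sm] smooth_on_ypd[OF sm] sm
          smooth_on_ypd[OF smooth_on_ypd[OF sm]] y])
  finally show ?thesis
    by (simp add: cartan_def cartan_jet_def ygrad_def yhess_def ythird_def algebra_simps)
qed

lemma torsion_eq_torsion_jet:
  fixes L :: "real^'n \<Rightarrow> real^'n \<Rightarrow> real"
  assumes "open V" "smooth_on V (L x)" "y \<in> V"
  shows "torsion L x y i = torsion_jet (L x y) (ygrad (L x) y) (yhess (L x) y) (ythird (L x) y) i"
  using assms
  by (simp add: torsion_def torsion_jet_def contract_def fund_eq_fund_jet cartan_eq_cartan_jet)

lemma yjet_cmult_add_inner:
  assumes S: "open S" and sm: "smooth_on S f" and y: "y \<in> S"
  shows "ygrad (\<lambda>z. c * f z + b \<bullet> z) y = c *\<^sub>R ygrad f y + b"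
    and "yhess (\<lambda>z. c * f z + b \<bullet> z) y = c *\<^sub>R yhess f y"
    and "ythird (\<lambda>z. c * f z + b \<bullet> z) y = (\<lambda>i j k. c * ythird f y i j k)"
proof -
  have d1: "ypd (\<lambda>z. c * f z + b \<bullet> z) j z = c * ypd f j z + b$j" if "z \<in> S" for j z
    by (rule ypd_cmult_add_inner[OF sm that])
  have d2: "ypd (ypd (\<lambda>z. c * f z + b \<bullet> z) j) i z = c * ypd (ypd f j) i z" if z: "z \<in> S" for i j z
  proof -
    have "ypd (ypd (\<lambda>z. c * f z + b \<bullet> z) j) i z = ypd (\<lambda>w. c * ypd f j w + b$j) i z"
      by (rule ypd_cong[OF S z]) (rule d1)
    also have "\<dots> = c * ypd (ypd f j) i z"
      by (rule ypd_cmult_add_const[OF smooth_on_ypd[OF sm] z])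
    finally show ?thesis .
  qed
  have "ypd (ypd (ypd (\<lambda>z. c * f z + b \<bullet> z) j) i) k y = ypd (\<lambda>w. c * ypd (ypd f j) i w + 0) k y"
    for i j k by (rule ypd_cong[OF S y]) (simp add: d2)
  also have "\<dots> i j k = c * ypd (ypd (ypd f j) i) k y" for i j k
    by (rule ypd_cmult_add_const[OF smooth_on_ypd[OF smooth_on_ypd[OF sm]] y])
  finally show "ythird (\<lambda>z. c * f z + b \<bullet> z) y = (\<lambda>i j k. c * ythird f y i j k)"
    by (simp add: ythird_def fun_eq_iff)
  show "ygrad (\<lambda>z. c * f z + b \<bullet> z) y = c *\<^sub>R ygrad f y + b"
    by (simp add: ygrad_def vec_eq_iff d1[OF y])
  show "yhess (\<lambda>z. c * f z + b \<bullet> z) y = c *\<^sub>R yhess f y"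
    by (simp add: yhess_def vec_eq_iff d2[OF y])
qed

lemma ythird_commute:
  assumes S: "open S" and sm: "smooth_on S f" and y: "y \<in> S"
  shows "ythird f y i j k = ythird f y i k j"
proof -
  have comm: "ypd (ypd f i) j z = ypd (ypd f j) i z" if "z \<in> S" for i j z
    by (rule ypd_commute[OF S sm that])
  have "ythird f y i j k = ypd (ypd (ypd f i) j) k y"
    unfolding ythird_def by (rule ypd_cong[OF S y]) (rule comm)
  also have "\<dots> = ypd (ypd (ypd f i) k) j y"
    by (rule ypd_commute[OF S smooth_on_ypd[OF sm] y])
  also have "\<dots> = ythird f y i k j"
    unfolding ythird_def by (rule ypd_cong[OF S y]) (rule comm)
  finally show ?thesis .
qed

lemma homogeneous_jet_of_homogeneous:
  assumes S: "open S" and sm: "smooth_on S f" and y: "y \<in> S"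
    and hom: "\<And>z t. z \<in> S \<Longrightarrow> t > 0 \<Longrightarrow> f (t *\<^sub>R z) = t * f z"
  shows "homogeneous_jet y (f y) (ygrad f y) (yhess f y) (ythird f y)"
proof -
  have hom1: "f (t *\<^sub>R z) = t powr 1 * f z" if "z \<in> S" "t > 0" for z t
    using hom[OF that] that(2) by simp
  have hom0: "ypd f i (t *\<^sub>R z) = t powr (1 - 1) * ypd f i z" if "z \<in> S" "t > 0" for i z t
    by (rule ypd_homogeneous[OF S sm hom1 that])
  have hom_1: "ypd (ypd f j) i (t *\<^sub>R z) = t powr (1 - 1 - 1) * ypd (ypd f j) i z"
    if "z \<in> S" "t > 0" for i j z t
    by (rule ypd_homogeneous[OF S smooth_on_ypd[OF sm] hom0 that])
  have comm: "ypd (ypd f i) j y = ypd (ypd f j) i y" for i j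
    by (rule ypd_commute[OF S sm y])
  have "ygrad f y \<bullet> y = f y"
    using euler_homogeneous[OF S sm y hom1[OF y]] by simp
  moreover have "yhess f y *v y = 0"
  proof -
    have "ygrad (ypd f i) y \<bullet> y = 0" for i
      using euler_homogeneous[OF S smooth_on_ypd[OF sm] y hom0[OF y]] by simp
    then show ?thesis
      by (simp add: yhess_def ygrad_def matrix_vector_mult_def inner_vec_def vec_eq_iff comm
          mult.commute)
  qed
  moreover have "(\<Sum>k\<in>UNIV. ythird f y i j k * y$k) = - yhess f y $ i $ j" for i j
    using euler_homogeneous[OF S smooth_on_ypd[OF smooth_on_ypd[OF sm]] y hom_1[OF y]]
    by (simp add: ythird_def yhess_def ygrad_def inner_vec_def mult.commute)
  moreover have "transpose (yhess f y) = yhess f y"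
    by (simp add: transpose_def yhess_def vec_eq_iff comm)
  ultimately show ?thesis
    using ythird_commute[OF S sm y] by (simp add: homogeneous_jet_def)
qed

lemma invertible_if_pos_def:
  fixes M :: "real^'n^'n"
  assumes "\<And>v. v \<noteq> 0 \<Longrightarrow> v \<bullet> (M *v v) > 0"
  shows "invertible M"
proof -
  have "\<forall>v. M *v v = 0 \<longrightarrow> v = 0"
    using assms by force
  then show ?thesis
    unfolding invertible_left_inverse matrix_left_invertible_ker[symmetric] .
qed

lemma finsler_smooth_on_fibre:
  "finsler U L \<Longrightarrow> x \<in> U \<Longrightarrow> smooth_on (UNIV - {0}) (L x)"
  unfolding finsler_def using smooth_on_slice[of U "UNIV - {0}" "\<lambda>p. L (fst p) (snd p)" x] by simp

lemma finsler_fibre: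
  fixes L :: "real^'n \<Rightarrow> real^'n \<Rightarrow> real"
  assumes fin: "finsler U L" and x: "x \<in> U" and y: "y \<noteq> 0"
  shows "L x y > 0"
    and "homogeneous_jet y (L x y) (ygrad (L x) y) (yhess (L x) y) (ythird (L x) y)"
    and "invertible (fund_jet (L x y) (ygrad (L x) y) (yhess (L x) y))"
    and "torsion L x y i = torsion_jet (L x y) (ygrad (L x) y) (yhess (L x) y) (ythird (L x) y) i"
proof -
  have V: "open (UNIV - {0 :: real^'n})" "y \<in> UNIV - {0}"
    using y by auto
  note sm = finsler_smooth_on_fibre[OF fin x]
  show "L x y > 0"
    using fin x y by (simp add: finsler_def)
  show "homogeneous_jet y (L x y) (ygrad (L x) y) (yhess (L x) y) (ythird (L x) y)"
    using fin x by (intro homogeneous_jet_of_homogeneous[OF V(1) sm V(2)]) (simp add: finsler_def)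
  show "invertible (fund_jet (L x y) (ygrad (L x) y) (yhess (L x) y))"
    using fin x y by (intro invertible_if_pos_def)
      (simp add: finsler_def flip: fund_eq_fund_jet[where L = L and x = x, OF V(1) sm V(2)])
  show "torsion L x y i = torsion_jet (L x y) (ygrad (L x) y) (yhess (L x) y) (ythird (L x) y) i"
    by (rule torsion_eq_torsion_jet[where L = L and x = x, OF V(1) sm V(2)])
qed

theorem lemma3:
  fixes U :: "(real^'n) set"
    and L :: "real^'n \<Rightarrow> real^'n \<Rightarrow> real"
    and \<sigma> :: "real^'n \<Rightarrow> real"
    and b :: "real^'n \<Rightarrow> real^'n"
  assumes "open U"
    and "finsler U L"
    and "smooth_on U \<sigma>"
    and "\<And>i. smooth_on U (\<lambda>x. b x $ i)"
    and "finsler U (\<lambda>x y. exp (\<sigma> x) * L x y + b x \<bullet> y)"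
    and "x \<in> U" and "y \<noteq> 0"
  shows "torsion (\<lambda>x y. exp (\<sigma> x) * L x y + b x \<bullet> y) x y i =
           torsion L x y i
           + (real CARD('n) + 1) / (2 * (exp (\<sigma> x) * L x y + b x \<bullet> y))
             * (b x $ i - ((b x \<bullet> y) / L x y) * ypd (L x) i y)"
proof -
  \<comment> \<open>Only fibre derivatives at the fixed \<open>x\<close> occur.\<close>
  note jet = finsler_fibre[OF assms(2,6,7)] and jet' = finsler_fibre[OF assms(5,6,7)]
  note yjet = yjet_cmult_add_inner[OF open_Diff[OF open_UNIV closed_singleton]
      finsler_smooth_on_fibre[OF assms(2,6)], of y "exp (\<sigma> x)" "b x"]
  have "torsion (\<lambda>x y. exp (\<sigma> x) * L x y + b x \<bullet> y) x y i
      = torsion_jet (exp (\<sigma> x) * L x y + b x \<bullet> y) (exp (\<sigma> x) *\<^sub>R ygrad (L x) y + b x)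
          (exp (\<sigma> x) *\<^sub>R yhess (L x) y) (\<lambda>i j k. exp (\<sigma> x) * ythird (L x) y i j k) i"
    using jet'(4) yjet assms(7) by simp
  also have "\<dots> = torsion L x y i + (real CARD('n) + 1) / (2 * (exp (\<sigma> x) * L x y + b x \<bullet> y))
      * (b x $ i - (b x \<bullet> y) / L x y * ygrad (L x) y $ i)"
    using jet jet'(1,3) yjet assms(7)
    by (subst torsion_jet_conformal_add_linear) (simp_all add: less_imp_neq[symmetric])
  finally show ?thesis
    by (simp add: ygrad_def)
qed

end
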